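(* Let $\mathcal{X}$ be a compact Polish space and $(\mathcal{Y},d_{\mathcal{Y}})$ a separable metric space. Then there is a metric $d_{\mathcal{X}}$ on $\mathcal{X}$ generating the topology of $\mathcal{X}$ such that the set of Lipschitz maps from $(\mathcal{X},d_{\mathcal{X}})$ to $(\mathcal{Y},d_{\mathcal{Y}})$ is uniformly dense in $C(\mathcal{X},\mathcal{Y})$.
   Context: $C(\mathcal{X},\mathcal{Y})$ is the set of continuous maps, with the topology of uniform convergence. *)

theory Defs
  imports "HOL-Analysis.Analysis"
begin

definition Polish_space :: "'a topology \<Rightarrow> bool" where
  "Polish_space X \<longleftrightarrow> completely_metrizable_space X \<and> separable_space X"

end

theory Submission
  imports Defs
begin

(* A continuous map f from a compact space X into a metric space Y is pinned down up to uniform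
   error e by finitely many conditions "f maps the basic open set U into the basic open set V",
   with every V of diameter < e.  When X and Y are second countable there are only countably
   many such finite patterns, so choosing one continuous map per realisable pattern gives a
   countable uniformly dense family g_0, g_1, ... in C(X, Y).  Adding to a compatible metric d
   on X the pseudometric sum_n 2^-n min(1, d_Y(g_n x, g_n y)) yields a metric that still
   induces the topology of X (each summand is continuous and the tails are uniformly small)
   and for which every g_n is Lipschitz, because g_n has bounded image. *)

lemma mdist_self [simp]: "x \<in> mspace m \<Longrightarrow> mdist m x x = 0"
  by simp

lemma openin_mball_of [simp]: "openin (mtopology_of m) (mball_of m x r)"
  unfolding mtopology_of_def mball_of_def
  by (rule Metric_space.openin_mball[OF Metric_space_mspace_mdist])

lemma (in Metric_space) separable_space_imp_second_countable:
  assumes "separable_space mtopology"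
  shows "second_countable mtopology"
proof -
  obtain D where D: "countable D" "D \<subseteq> M" "mtopology closure_of D = M"
    using assms unfolding separable_space_def by auto
  define \<B> where "\<B> = (\<lambda>(y, n). mball y (inverse (Suc n))) ` (D \<times> (UNIV :: nat set))"
  show ?thesis
    unfolding second_countable_def
  proof (intro exI conjI ballI allI impI)
    show "countable \<B>"
      using D(1) by (simp add: \<B>_def)
    show "openin mtopology V" if "V \<in> \<B>" for V
      using that by (auto simp: \<B>_def)
    fix U x
    assume "openin mtopology U \<and> x \<in> U"
    then obtain r where "r > 0" and r: "mball x r \<subseteq> U" and "x \<in> M"
      unfolding openin_mtopology by blast
    obtain n :: nat where n: "inverse (Suc n) < r / 2"
      using \<open>r > 0\<close> reals_Archimedean half_gt_zero by blast
    have "x \<in> mtopology closure_of D" "inverse (Suc n) > (0::real)"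
      using D(3) \<open>x \<in> M\<close> by auto
    then obtain y where "y \<in> D" and y: "y \<in> mball x (inverse (Suc n))"
      unfolding metric_closure_of by blast
    have "mball y (inverse (Suc n)) \<subseteq> mball x r"
    proof
      fix z assume z: "z \<in> mball y (inverse (Suc n))"
      have "d x z \<le> d x y + d y z"
        using y z by (auto intro: triangle)
      then show "z \<in> mball x r"
        using y z n by auto
    qed
    moreover have "x \<in> mball y (inverse (Suc n))"
      using y by (auto simp: commute)
    moreover have "mball y (inverse (Suc n)) \<in> \<B>"
      using \<open>y \<in> D\<close> by (auto simp: \<B>_def)
    ultimately show "\<exists>V\<in>\<B>. x \<in> V \<and> V \<subseteq> U"
      using r by blast
  qed
qed

lemma Metric_space_add_pseudometric:
  assumes "Metric_space S d"
    and "\<And>x y. 0 \<le> p x y" "\<And>x y. p x y = p y x" "\<And>x. x \<in> S \<Longrightarrow> p x x = 0"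
    and "\<And>x y z. \<lbrakk>x \<in> S; y \<in> S; z \<in> S\<rbrakk> \<Longrightarrow> p x z \<le> p x y + p y z"
  shows "Metric_space S (\<lambda>x y. d x y + p x y)"
proof -
  interpret Metric_space S d by fact
  show ?thesis
  proof
    show "0 \<le> d x y + p x y" for x y
      using assms(2)[of x y] by simp
    show "d x y + p x y = d y x + p y x" for x y
      using assms(3) commute by simp
    show "d x y + p x y = 0 \<longleftrightarrow> x = y" if "x \<in> S" "y \<in> S" for x y
    proof -
      have "d x y + p x y = 0 \<longleftrightarrow> d x y = 0 \<and> p x y = 0"
        using assms(2)[of x y] nonneg[of x y] by linarith
      then show ?thesis
        using that assms(4) by auto
    qed
    show "d x z + p x z \<le> (d x y + p x y) + (d y z + p y z)" if "x \<in> S" "y \<in> S" "z \<in> S" for x y z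
      using that assms(5) triangle by fastforce
  qed
qed

lemma (in Metric_space) mtopology_add_pseudometric:
  assumes "Metric_space M (\<lambda>x y. d x y + p x y)" and "\<And>x y. 0 \<le> p x y"
    and "\<And>x r. \<lbrakk>x \<in> M; r > 0\<rbrakk> \<Longrightarrow> \<exists>V. openin mtopology V \<and> x \<in> V \<and> (\<forall>z\<in>V. p x z < r)"
  shows "Metric_space.mtopology M (\<lambda>x y. d x y + p x y) = mtopology"
proof -
  interpret D: Metric_space M "\<lambda>x y. d x y + p x y" by fact
  have "openin D.mtopology U \<longleftrightarrow> openin mtopology U" for U
  proof
    assume U: "openin mtopology U"
    have "D.mball x r \<subseteq> mball x r" for x r
    proof
      fix z assume "z \<in> D.mball x r"
      then show "z \<in> mball x r"
        using assms(2)[of x z] by auto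
    qed
    moreover have "\<exists>r>0. mball x r \<subseteq> U" if "x \<in> U" for x
      using U that unfolding openin_mtopology by blast
    ultimately have "\<exists>r>0. D.mball x r \<subseteq> U" if "x \<in> U" for x
      using that by (meson order_trans)
    then show "openin D.mtopology U"
      using U unfolding openin_mtopology D.openin_mtopology by blast
  next
    assume U: "openin D.mtopology U"
    show "openin mtopology U"
    proof (subst openin_subopen, intro ballI)
      fix x assume "x \<in> U"
      then obtain r where "r > 0" and r: "D.mball x r \<subseteq> U" and "x \<in> M"
        using U unfolding D.openin_mtopology by blast
      then obtain V where V: "openin mtopology V" "x \<in> V" "\<forall>z\<in>V. p x z < r / 2"
        using assms(3)[of x "r / 2"] by auto
      have "V \<inter> mball x (r / 2) \<subseteq> D.mball x r"
        using V by auto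
      then show "\<exists>T. openin mtopology T \<and> x \<in> T \<and> T \<subseteq> U"
        using V \<open>x \<in> M\<close> \<open>r > 0\<close> r by (intro exI[of _ "V \<inter> mball x (r / 2)"]) auto
    qed
  qed
  then show ?thesis
    by (simp add: topology_eq)
qed

lemma countable_uniformly_dense_continuous_maps:
  assumes "compact_space X" "second_countable X" "second_countable (mtopology_of m)"
  obtains F where "countable F" "\<And>g. g \<in> F \<Longrightarrow> continuous_map X (mtopology_of m) g"
    "\<And>f e. \<lbrakk>continuous_map X (mtopology_of m) f; e > 0\<rbrakk>
       \<Longrightarrow> \<exists>g\<in>F. \<forall>x\<in>topspace X. mdist m (f x) (g x) < e"
proof -
  obtain \<B> where "countable \<B>" and \<B>: "\<And>U. U \<in> \<B> \<Longrightarrow> openin X U"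
    "\<And>W x. \<lbrakk>openin X W; x \<in> W\<rbrakk> \<Longrightarrow> \<exists>U\<in>\<B>. x \<in> U \<and> U \<subseteq> W"
    using assms(2) unfolding second_countable_def by metis
  obtain \<V> where "countable \<V>" and \<V>: "\<And>V. V \<in> \<V> \<Longrightarrow> openin (mtopology_of m) V"
    "\<And>W y. \<lbrakk>openin (mtopology_of m) W; y \<in> W\<rbrakk> \<Longrightarrow> \<exists>V\<in>\<V>. y \<in> V \<and> V \<subseteq> W"
    using assms(3) unfolding second_countable_def by metis
  define fits where
    "fits P g \<longleftrightarrow> continuous_map X (mtopology_of m) g \<and> (\<forall>U V. (U, V) \<in> P \<longrightarrow> g ` U \<subseteq> V)"
    for P g
  define \<P> where "\<P> = {P. finite P \<and> P \<subseteq> \<B> \<times> \<V>}"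
  define F where "F = (\<lambda>P. SOME g. fits P g) ` {P\<in>\<P>. \<exists>g. fits P g}"
  have F_fits: "\<exists>g\<in>F. fits P g" if "P \<in> \<P>" "fits P f" for P f
    using that someI[of "fits P" f] unfolding F_def by blast
  show ?thesis
  proof
    have "countable \<P>"
      unfolding \<P>_def using \<open>countable \<B>\<close> \<open>countable \<V>\<close>
      by (intro countable_Collect_finite_subset) auto
    then show "countable F"
      unfolding F_def by (intro countable_image) (auto intro: countable_subset)
    show "continuous_map X (mtopology_of m) g" if "g \<in> F" for g
      using that someI_ex[of "fits _"] unfolding F_def fits_def by blast
    fix f and e :: real
    assume f: "continuous_map X (mtopology_of m) f" and "e > 0"
    define \<P>f where "\<P>f = {(U, V) \<in> \<B> \<times> \<V>. f ` U \<subseteq> V \<and> (\<forall>a\<in>V. \<forall>b\<in>V. mdist m a b < e)}"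
    have "\<exists>U\<in>fst ` \<P>f. x \<in> U" if x: "x \<in> topspace X" for x
    proof -
      have "f x \<in> mspace m"
        using x f by (auto simp: continuous_map_def)
      with \<open>e > 0\<close> have "f x \<in> mball_of m (f x) (e / 2)"
        by simp
      then obtain V where "V \<in> \<V>" "f x \<in> V" and V: "V \<subseteq> mball_of m (f x) (e / 2)"
        using \<V>(2) openin_mball_of by metis
      have "openin X {z \<in> topspace X. f z \<in> V}"
        using openin_continuous_map_preimage[OF f \<V>(1)[OF \<open>V \<in> \<V>\<close>]] .
      then obtain U where "U \<in> \<B>" "x \<in> U" "U \<subseteq> {z \<in> topspace X. f z \<in> V}"
        using \<B>(2) x \<open>f x \<in> V\<close> by blast
      moreover have "mdist m a b < e" if "a \<in> V" "b \<in> V" for a b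
      proof -
        have "a \<in> mspace m" "b \<in> mspace m" "f x \<in> mspace m"
          and "mdist m (f x) a < e / 2" "mdist m (f x) b < e / 2"
          using V that by auto
        then have "mdist m a b \<le> mdist m a (f x) + mdist m (f x) b"
          by (intro mdist_triangle)
        then show ?thesis
          using \<open>mdist m (f x) a < e / 2\<close> \<open>mdist m (f x) b < e / 2\<close>
          by (simp add: mdist_commute[of m a])
      qed
      ultimately show ?thesis
        using \<open>V \<in> \<V>\<close> unfolding \<P>f_def by force
    qed
    moreover have "openin X U" if "U \<in> fst ` \<P>f" for U
      using that \<B>(1) unfolding \<P>f_def by auto
    ultimately obtain \<U> where "finite \<U>" "\<U> \<subseteq> fst ` \<P>f" and cover: "topspace X \<subseteq> \<Union>\<U>"
      using assms(1) unfolding compact_space_alt by (metis UnionI subsetI)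
    then obtain P where "P \<subseteq> \<P>f" "finite P" and "\<U> = fst ` P"
      by (meson finite_subset_image)
    then have "P \<in> \<P>" "fits P f"
      using f unfolding \<P>_def \<P>f_def fits_def by auto
    then obtain g where "g \<in> F" "fits P g"
      using F_fits by blast
    moreover have "mdist m (f x) (g x) < e" if x: "x \<in> topspace X" for x
    proof -
      obtain U V where "(U, V) \<in> P" "x \<in> U"
        using cover \<open>\<U> = fst ` P\<close> x by auto
      then have "g ` U \<subseteq> V" "f ` U \<subseteq> V" "\<forall>a\<in>V. \<forall>b\<in>V. mdist m a b < e"
        using \<open>fits P g\<close> \<open>P \<subseteq> \<P>f\<close> unfolding fits_def \<P>f_def by auto
      then show ?thesis
        using \<open>x \<in> U\<close> by blast
    qed
    ultimately show "\<exists>g\<in>F. \<forall>x\<in>topspace X. mdist m (f x) (g x) < e"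
      by blast
  qed
qed

definition pullback_series_dist :: "'b metric \<Rightarrow> (nat \<Rightarrow> 'a \<Rightarrow> 'b) \<Rightarrow> 'a \<Rightarrow> 'a \<Rightarrow> real" where
  "pullback_series_dist m g x y = (\<Sum>n. (1/2)^n * min 1 (mdist m (g n x) (g n y)))"

lemma summable_pullback_series_dist:
  "summable (\<lambda>n. (1/2::real)^n * min 1 (mdist m (g n x) (g n y)))"
  by (rule summable_comparison_test'[where g = "\<lambda>n. (1/2::real)^n" and N = 0]) auto

lemma pullback_series_dist_nonneg: "0 \<le> pullback_series_dist m g x y"
  unfolding pullback_series_dist_def
  by (intro suminf_nonneg summable_pullback_series_dist) auto

lemma pullback_series_dist_commute: "pullback_series_dist m g x y = pullback_series_dist m g y x"
  by (simp add: pullback_series_dist_def mdist_commute)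

lemma pullback_series_dist_self:
  assumes "\<And>n. g n x \<in> mspace m"
  shows "pullback_series_dist m g x x = 0"
  using assms by (simp add: pullback_series_dist_def)

lemma pullback_series_dist_triangle:
  assumes "\<And>n. g n x \<in> mspace m" "\<And>n. g n y \<in> mspace m" "\<And>n. g n z \<in> mspace m"
  shows "pullback_series_dist m g x z \<le> pullback_series_dist m g x y + pullback_series_dist m g y z"
proof -
  have "min 1 (mdist m (g n x) (g n z)) \<le> min 1 (mdist m (g n x) (g n y)) + min 1 (mdist m (g n y) (g n z))"
    for n
  proof -
    have "min 1 a \<le> min 1 b + min 1 c" if "a \<le> b + c" "0 \<le> b" "0 \<le> c" for a b c :: real
      using that by (auto simp: min_def)
    then show ?thesis
      using mdist_triangle[OF assms[of n]] by simp
  qed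
  then have "(1/2::real)^n * min 1 (mdist m (g n x) (g n z))
      \<le> (1/2)^n * min 1 (mdist m (g n x) (g n y)) + (1/2)^n * min 1 (mdist m (g n y) (g n z))" for n
    by (simp add: distrib_left[symmetric])
  then have "pullback_series_dist m g x z \<le> (\<Sum>n. (1/2)^n * min 1 (mdist m (g n x) (g n y))
      + (1/2)^n * min 1 (mdist m (g n y) (g n z)))"
    unfolding pullback_series_dist_def
    by (intro suminf_le summable_add summable_pullback_series_dist)
  also have "\<dots> = pullback_series_dist m g x y + pullback_series_dist m g y z"
    unfolding pullback_series_dist_def
    by (intro suminf_add[symmetric] summable_pullback_series_dist)
  finally show ?thesis .
qed

lemma pullback_series_dist_ge_term:
  "(1/2::real)^n * min 1 (mdist m (g n x) (g n y)) \<le> pullback_series_dist m g x y"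
  unfolding pullback_series_dist_def
  using sum_le_suminf[OF summable_pullback_series_dist, of "{n}"] by simp

lemma pullback_series_dist_le:
  assumes "\<And>n. n < N \<Longrightarrow> mdist m (g n x) (g n y) \<le> \<epsilon>"
  shows "pullback_series_dist m g x y \<le> N * \<epsilon> + 2 * (1/2)^N"
proof -
  define t where "t = (\<lambda>n. (1/2::real)^n * min 1 (mdist m (g n x) (g n y)))"
  have "summable t"
    unfolding t_def by (rule summable_pullback_series_dist)
  have "(\<Sum>k. t (k + N)) \<le> (\<Sum>k. (1/2)^N * (1/2::real)^k)"
    using summable_ignore_initial_segment[OF \<open>summable t\<close>]
    by (intro suminf_le) (auto simp: t_def power_add)
  also have "\<dots> = 2 * (1/2)^N"
    by (simp add: suminf_mult suminf_geometric)
  finally have "(\<Sum>k. t (k + N)) \<le> 2 * (1/2)^N" .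
  moreover have "(\<Sum>n<N. t n) \<le> (\<Sum>n<N. \<epsilon>)"
  proof (intro sum_mono)
    fix n assume "n \<in> {..<N}"
    have "t n \<le> min 1 (mdist m (g n x) (g n y))"
      unfolding t_def by (intro mult_left_le_one_le) (auto simp: power_le_one)
    then show "t n \<le> \<epsilon>"
      using assms \<open>n \<in> {..<N}\<close> by fastforce
  qed
  moreover have "pullback_series_dist m g x y = (\<Sum>k. t (k + N)) + (\<Sum>n<N. t n)"
    using suminf_split_initial_segment[OF \<open>summable t\<close>, of N]
    by (simp add: pullback_series_dist_def t_def)
  ultimately show ?thesis
    by simp
qed

lemma pullback_series_dist_small_near:
  assumes "\<And>n. continuous_map X (mtopology_of m) (g n)" "x \<in> topspace X" "r > 0"
  obtains V where "openin X V" "x \<in> V" "\<And>z. z \<in> V \<Longrightarrow> pullback_series_dist m g x z < r"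
proof -
  obtain N where N: "(1/2::real)^N < r / 4"
    using real_arch_pow_inv[of "r / 4" "1/2"] \<open>r > 0\<close> by auto
  define \<epsilon> where "\<epsilon> = r / (2 * (N + 1))"
  define V where "V = (\<Inter>n<N. {z \<in> topspace X. g n z \<in> mball_of m (g n x) \<epsilon>}) \<inter> topspace X"
  have "openin X {z \<in> topspace X. g n z \<in> mball_of m a \<epsilon>}" for n a
    using openin_continuous_map_preimage[OF assms(1) openin_mball_of] .
  then have "openin X V"
    unfolding V_def by (intro openin_INT finite_lessThan)
  moreover have "g n x \<in> mspace m" for n
    using continuous_map_image_subset_topspace[OF assms(1)] assms(2) by auto
  then have "x \<in> V"
    using assms(2,3) by (auto simp: V_def \<epsilon>_def)
  moreover have "pullback_series_dist m g x z < r" if "z \<in> V" for z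
  proof -
    have "pullback_series_dist m g x z \<le> N * \<epsilon> + 2 * (1/2)^N"
      using that unfolding V_def by (intro pullback_series_dist_le less_imp_le) auto
    moreover have "N * \<epsilon> < r / 2"
      using \<open>r > 0\<close> by (simp add: \<epsilon>_def field_simps)
    ultimately show ?thesis
      using N by linarith
  qed
  ultimately show ?thesis
    using that by blast
qed

lemma Lipschitz_continuous_map_pullback_series:
  assumes "Metric_space S d'"
    and "\<And>x y. \<lbrakk>x \<in> S; y \<in> S\<rbrakk> \<Longrightarrow> pullback_series_dist m g x y \<le> d' x y"
    and "g n ` S \<subseteq> mspace m" and "Metric_space.mbounded (mspace m) (mdist m) (g n ` S)"
  shows "Lipschitz_continuous_map (metric (S, d')) m (g n)"
proof -
  interpret Metric_space S d' by fact
  interpret Y: Metric_space "mspace m" "mdist m" by simp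
  obtain B where B: "\<And>x y. \<lbrakk>x \<in> S; y \<in> S\<rbrakk> \<Longrightarrow> mdist m (g n x) (g n y) \<le> B"
    using assms(4) unfolding Y.mbounded_alt by fast
  define C where "C = max 1 B * 2^n"
  have "mdist m (g n x) (g n y) \<le> C * d' x y" if "x \<in> S" "y \<in> S" for x y
  proof -
    have "a \<le> K * min 1 a" if "0 \<le> a" "a \<le> K" "1 \<le> K" for a K :: real
      using that mult_right_mono[of 1 K a] by (auto simp: min_def)
    then have "mdist m (g n x) (g n y) \<le> max 1 B * min 1 (mdist m (g n x) (g n y))"
      using B[OF that] by simp
    also have "\<dots> = C * ((1/2)^n * min 1 (mdist m (g n x) (g n y)))"
      by (simp add: C_def power_one_over)
    also have "\<dots> \<le> C * d' x y"
      using order_trans[OF pullback_series_dist_ge_term assms(2)[OF that]]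
      by (intro mult_left_mono) (auto simp: C_def)
    finally show ?thesis .
  qed
  then show ?thesis
    unfolding Lipschitz_continuous_map_def using assms(3) by auto
qed

lemma compatible_metric_Lipschitz_sequence:
  fixes g :: "nat \<Rightarrow> 'a \<Rightarrow> 'b"
  assumes "Metric_space (topspace X) d" "Metric_space.mtopology (topspace X) d = X"
    and "\<And>n. continuous_map X (mtopology_of m) (g n)"
    and "\<And>n. Metric_space.mbounded (mspace m) (mdist m) (g n ` topspace X)"
  obtains d' where "Metric_space (topspace X) d'" "Metric_space.mtopology (topspace X) d' = X"
    "\<And>n. Lipschitz_continuous_map (metric (topspace X, d')) m (g n)"
proof -
  interpret Metric_space "topspace X" d by fact
  define d' where "d' = (\<lambda>x y. d x y + pullback_series_dist m g x y)"
  have g_mspace: "g n ` topspace X \<subseteq> mspace m" for n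
    using continuous_map_image_subset_topspace[OF assms(3)] by simp
  have "Metric_space (topspace X) d'"
    unfolding d'_def using g_mspace
    by (intro Metric_space_add_pseudometric Metric_space_axioms pullback_series_dist_nonneg
        pullback_series_dist_commute pullback_series_dist_self pullback_series_dist_triangle) auto
  moreover have "Metric_space.mtopology (topspace X) d' = X"
  proof -
    have "\<exists>V. openin mtopology V \<and> x \<in> V \<and> (\<forall>z\<in>V. pullback_series_dist m g x z < r)"
      if x: "x \<in> topspace X" and r: "r > 0" for x r
    proof -
      obtain V where "openin X V" "x \<in> V" "\<And>z. z \<in> V \<Longrightarrow> pullback_series_dist m g x z < r"
        using pullback_series_dist_small_near[where g = g, OF assms(3) x r] by blast
      then show ?thesis
        using assms(2) by auto
    qed
    then have "Metric_space.mtopology (topspace X) d' = mtopology"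
      using \<open>Metric_space (topspace X) d'\<close> unfolding d'_def
      by (intro mtopology_add_pseudometric pullback_series_dist_nonneg)
    with assms(2) show ?thesis
      by simp
  qed
  moreover have "Lipschitz_continuous_map (metric (topspace X, d')) m (g n)" for n
    using \<open>Metric_space (topspace X) d'\<close> g_mspace assms(4)
    by (intro Lipschitz_continuous_map_pullback_series) (auto simp: d'_def)
  ultimately show ?thesis
    using that by blast
qed

lemma compatible_metric_Lipschitz_countable:
  assumes "Metric_space (topspace X) d" "Metric_space.mtopology (topspace X) d = X" "countable F"
    and "\<And>g. g \<in> F \<Longrightarrow> continuous_map X (mtopology_of m) g"
    and "\<And>g. g \<in> F \<Longrightarrow> Metric_space.mbounded (mspace m) (mdist m) (g ` topspace X)"
  obtains d' where "Metric_space (topspace X) d'" "Metric_space.mtopology (topspace X) d' = X"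
    "\<And>g. g \<in> F \<Longrightarrow> Lipschitz_continuous_map (metric (topspace X, d')) m g"
proof (cases "F = {}")
  case True
  then show ?thesis
    using assms that by blast
next
  case False
  then have "from_nat_into F n \<in> F" for n
    by (rule from_nat_into)
  then obtain d' where "Metric_space (topspace X) d'" "Metric_space.mtopology (topspace X) d' = X"
    "\<And>n. Lipschitz_continuous_map (metric (topspace X, d')) m (from_nat_into F n)"
    using compatible_metric_Lipschitz_sequence[OF assms(1,2)] assms(4,5) by metis
  then show ?thesis
    using that range_from_nat_into[OF False assms(3)] by (metis rangeE)
qed

theorem mainTheorem9:
  fixes X :: "'a topology" and m :: "'b metric"
  assumes "compact_space X" and "Polish_space X"
    and "separable_space (mtopology_of m)"
  shows "\<exists>dX. Metric_space (topspace X) dX \<and> Metric_space.mtopology (topspace X) dX = X \<and>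
    (\<forall>f. continuous_map X (mtopology_of m) f \<longrightarrow>
       (\<forall>e>0. \<exists>g. Lipschitz_continuous_map (metric (topspace X, dX)) m g \<and>
                  (\<forall>x\<in>topspace X. mdist m (f x) (g x) < e)))"
proof -
  obtain d where d: "Metric_space (topspace X) d" "Metric_space.mtopology (topspace X) d = X"
    using assms(2) completely_metrizable_imp_metrizable_space
    unfolding Polish_space_def metrizable_space_def
    by (metis Metric_space.topspace_mtopology)
  have "second_countable X"
    using Metric_space.separable_space_imp_second_countable[OF d(1)] assms(2) d(2)
    unfolding Polish_space_def by simp
  moreover have "second_countable (mtopology_of m)"
    using Metric_space.separable_space_imp_second_countable[OF Metric_space_mspace_mdist] assms(3)
    unfolding mtopology_of_def by blast
  ultimately obtain F where "countable F" and F_cont: "\<And>g. g \<in> F \<Longrightarrow> continuous_map X (mtopology_of m) g"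
    and F_dense: "\<And>f e. \<lbrakk>continuous_map X (mtopology_of m) f; e > 0\<rbrakk>
       \<Longrightarrow> \<exists>g\<in>F. \<forall>x\<in>topspace X. mdist m (f x) (g x) < e"
    using countable_uniformly_dense_continuous_maps assms(1) by blast
  have "Metric_space.mbounded (mspace m) (mdist m) (g ` topspace X)" if "g \<in> F" for g
    using image_compactin[OF assms(1)[unfolded compact_space_def] F_cont[OF that]]
    by (simp add: Metric_space.compactin_imp_mbounded mtopology_of_def)
  then obtain dX where "Metric_space (topspace X) dX" "Metric_space.mtopology (topspace X) dX = X"
    "\<And>g. g \<in> F \<Longrightarrow> Lipschitz_continuous_map (metric (topspace X, dX)) m g"
    using compatible_metric_Lipschitz_countable[OF d \<open>countable F\<close> F_cont] by blast
  then show ?thesis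
    using F_dense by blast
qed

end
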